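(* Let $(R,\mathfrak m)$ be a one-dimensional Cohen–Macaulay local ring admitting a canonical module $\omega_R$ with $R\subseteq\omega_R\subseteq\overline{R}$, let $B=\mathfrak m:\mathfrak m$ with Jacobson radical $J(B)$, and assume $\mathfrak m^2\subseteq R:\omega_R$. Let $I$ be an ideal of $B$ contained in $J(B)$. The following are equivalent: (1) for every minimal system of generators $\{x_1,\dots,x_n\}$ of $\mathfrak m$ for which $R:\omega_R=(x_1,\dots,x_r)^2+(x_{r+1},\dots,x_n)$ (for some $0\le r\le n$), there is no $x\in I$ such that $x_j=x\,x_i$ for some $i,j\in\{1,\dots,r\}$; (2) $I\subseteq (R:\omega_R):\mathfrak m$.
   Context: $Q(R)$ is the total ring of fractions and $\overline R$ the integral closure of $R$ in $Q(R)$; for fractional ideals $I,J$, $I:J=\{r\in Q(R)\mid rJ\subseteq I\}$. *)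

theory Defs
  imports Main
begin

text \<open>Setting: the total ring of fractions Q(R) is the ambient type 'a (all of UNIV);
  R is a subring of it. All colons, integral closure etc. are computed in Q(R).\<close>

definition subring :: "'a::comm_ring_1 set \<Rightarrow> bool" where
  "subring R \<longleftrightarrow> 1 \<in> R \<and> (\<forall>x\<in>R. \<forall>y\<in>R. x + y \<in> R \<and> x * y \<in> R \<and> - x \<in> R)"

definition submod :: "'a::comm_ring_1 set \<Rightarrow> 'a set \<Rightarrow> bool" where
  "submod R M \<longleftrightarrow> 0 \<in> M \<and> (\<forall>x\<in>M. \<forall>y\<in>M. x + y \<in> M) \<and> (\<forall>r\<in>R. \<forall>x\<in>M. r * x \<in> M)"

definition gen :: "'a::comm_ring_1 set \<Rightarrow> 'a set \<Rightarrow> 'a set" where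
  "gen R S = \<Inter>{M. submod R M \<and> S \<subseteq> M}"

definition colon :: "'a::comm_ring_1 set \<Rightarrow> 'a set \<Rightarrow> 'a set" where
  "colon I J = {r. \<forall>y\<in>J. r * y \<in> I}"

definition ideal_prod :: "'a::comm_ring_1 set \<Rightarrow> 'a set \<Rightarrow> 'a set \<Rightarrow> 'a set" where
  "ideal_prod R A B = gen R {a * b | a b. a \<in> A \<and> b \<in> B}"

definition ideal_sum :: "'a::comm_ring_1 set \<Rightarrow> 'a set \<Rightarrow> 'a set \<Rightarrow> 'a set" where
  "ideal_sum R A B = gen R (A \<union> B)"

definition ideal_of :: "'a::comm_ring_1 set \<Rightarrow> 'a set \<Rightarrow> bool" where
  "ideal_of S I \<longleftrightarrow> I \<subseteq> S \<and> submod S I"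

definition maximal_ideal :: "'a::comm_ring_1 set \<Rightarrow> 'a set \<Rightarrow> bool" where
  "maximal_ideal S M \<longleftrightarrow> ideal_of S M \<and> M \<noteq> S \<and>
     (\<forall>N. ideal_of S N \<and> M \<subseteq> N \<longrightarrow> N = M \<or> N = S)"

definition prime_ideal :: "'a::comm_ring_1 set \<Rightarrow> 'a set \<Rightarrow> bool" where
  "prime_ideal S P \<longleftrightarrow> ideal_of S P \<and> P \<noteq> S \<and>
     (\<forall>a\<in>S. \<forall>b\<in>S. a * b \<in> P \<longrightarrow> a \<in> P \<or> b \<in> P)"

definition jacobson :: "'a::comm_ring_1 set \<Rightarrow> 'a set" where
  "jacobson S = \<Inter>{M. maximal_ideal S M}"

definition nonzerodivisor :: "'a::comm_ring_1 set \<Rightarrow> 'a \<Rightarrow> bool" where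
  "nonzerodivisor R s \<longleftrightarrow> s \<in> R \<and> (\<forall>y\<in>R. s * y = 0 \<longrightarrow> y = 0)"

definition total_ring_of_fractions :: "'a::comm_ring_1 set \<Rightarrow> bool" where
  "total_ring_of_fractions R \<longleftrightarrow> subring R \<and>
     (\<forall>s. nonzerodivisor R s \<longrightarrow> (\<exists>t. s * t = 1)) \<and>
     (\<forall>q. \<exists>a\<in>R. \<exists>s. nonzerodivisor R s \<and> s * q = a)"

definition noetherian :: "'a::comm_ring_1 set \<Rightarrow> bool" where
  "noetherian R \<longleftrightarrow> (\<forall>I. ideal_of R I \<longrightarrow> (\<exists>F. finite F \<and> F \<subseteq> I \<and> gen R F = I))"

definition local_ring :: "'a::comm_ring_1 set \<Rightarrow> 'a set \<Rightarrow> bool" where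
  "local_ring R m \<longleftrightarrow> maximal_ideal R m \<and> (\<forall>M. maximal_ideal R M \<longrightarrow> M = m)"

definition dim_ge :: "'a::comm_ring_1 set \<Rightarrow> nat \<Rightarrow> bool" where
  "dim_ge R n \<longleftrightarrow> (\<exists>ps :: 'a set list. length ps = n + 1 \<and>
     (\<forall>i<length ps. prime_ideal R (ps ! i)) \<and>
     (\<forall>i. i + 1 < length ps \<longrightarrow> ps ! i \<subset> ps ! (i + 1)))"

definition regular_seq :: "'a::comm_ring_1 set \<Rightarrow> 'a set \<Rightarrow> 'a list \<Rightarrow> bool" where
  "regular_seq R m xs \<longleftrightarrow> set xs \<subseteq> m \<and> gen R (set xs) \<noteq> R \<and>
     (\<forall>i<length xs. \<forall>y\<in>R. xs ! i * y \<in> gen R (set (take i xs)) \<longrightarrow> y \<in> gen R (set (take i xs)))"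

definition depth_ge :: "'a::comm_ring_1 set \<Rightarrow> 'a set \<Rightarrow> nat \<Rightarrow> bool" where
  "depth_ge R m n \<longleftrightarrow> (\<exists>xs. length xs = n \<and> regular_seq R m xs)"

definition cohen_macaulay_local :: "'a::comm_ring_1 set \<Rightarrow> 'a set \<Rightarrow> bool" where
  "cohen_macaulay_local R m \<longleftrightarrow> noetherian R \<and> local_ring R m \<and>
     (\<forall>n. depth_ge R m n \<longleftrightarrow> dim_ge R n)"

definition krull_dim_one :: "'a::comm_ring_1 set \<Rightarrow> bool" where
  "krull_dim_one R \<longleftrightarrow> dim_ge R 1 \<and> \<not> dim_ge R 2"

definition integral_over :: "'a::comm_ring_1 set \<Rightarrow> 'a \<Rightarrow> bool" where
  "integral_over R x \<longleftrightarrow> (\<exists>p. set p \<subseteq> R \<and>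
     x ^ length p + (\<Sum>i<length p. p ! i * x ^ i) = 0)"

definition int_closure :: "'a::comm_ring_1 set \<Rightarrow> 'a set" where
  "int_closure R = {x. integral_over R x}"

text \<open>fractional ideal: finitely generated R-submodule I of Q(R) with Q(R) I = Q(R)\<close>
definition frac_ideal :: "'a::comm_ring_1 set \<Rightarrow> 'a set \<Rightarrow> bool" where
  "frac_ideal R I \<longleftrightarrow> submod R I \<and> (\<exists>F. finite F \<and> gen R F = I) \<and>
     (\<exists>u\<in>I. \<exists>v. u * v = 1)"

text \<open>canonical (fractional) ideal, via the duality K:(K:I) = I (Herzog-Kunz)\<close>
definition canonical_ideal :: "'a::comm_ring_1 set \<Rightarrow> 'a set \<Rightarrow> bool" where
  "canonical_ideal R K \<longleftrightarrow> frac_ideal R K \<and>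
     (\<forall>I. frac_ideal R I \<longrightarrow> colon K (colon K I) = I)"

definition min_gens :: "'a::comm_ring_1 set \<Rightarrow> 'a set \<Rightarrow> 'a list \<Rightarrow> bool" where
  "min_gens R m xs \<longleftrightarrow> set xs \<subseteq> m \<and> gen R (set xs) = m \<and>
     (\<forall>ys. set ys \<subseteq> m \<and> gen R (set ys) = m \<longrightarrow> length xs \<le> length ys)"

end

theory Submission
  imports Defs
begin

(* Write K = R : omega and B = m : m.
   (2) => (1): if x m lies in K and x_j = x x_i with i, j <= r, then x_j lies in
   K = (x_1, ..., x_r)^2 + (x_{r+1}, ..., x_n), i.e. x_j = c x_j + (other generators) with
   c in m; since 1 - c is a unit, x_j is redundant.
   (1) => (2): we may assume K <> R, so K lies in m and, omega being integral over R, so does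
   K omega; hence K is a B-module.  Take minimal generators with x_{r+1}, ..., x_n in K and r
   minimal.  Then every element of K has its first r coefficients in m, which gives the
   decomposition of K, and this survives exchanging some x_l (l <= r) for an element whose
   x_l-coefficient is a unit.  If x x_i is not in K, write x x_i = sum a_l x_l: either some
   a_l (l <= r, l <> i) is a unit and the exchange x_l := x x_i yields a relation excluded
   by (1), or (x - a_i) x_i lies in K with x - a_i a unit of B (x is in J(B)), which puts x_i
   into K against the minimality of r. *)

lemma submod_gen: "submod R (gen R S)"
  unfolding gen_def submod_def by auto

lemma gen_mem: "x \<in> S \<Longrightarrow> x \<in> gen R S"
  unfolding gen_def by auto

lemma gen_minimal: "submod R M \<Longrightarrow> S \<subseteq> M \<Longrightarrow> gen R S \<subseteq> M"
  unfolding gen_def by auto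

lemma gen_mono: "S \<subseteq> T \<Longrightarrow> gen R S \<subseteq> gen R T"
  unfolding gen_def by blast

lemma subring_one: "subring R \<Longrightarrow> 1 \<in> R"
  and subring_add: "subring R \<Longrightarrow> x \<in> R \<Longrightarrow> y \<in> R \<Longrightarrow> x + y \<in> R"
  and subring_mult: "subring R \<Longrightarrow> x \<in> R \<Longrightarrow> y \<in> R \<Longrightarrow> x * y \<in> R"
  and subring_uminus: "subring R \<Longrightarrow> x \<in> R \<Longrightarrow> - x \<in> R"
  unfolding subring_def by auto

lemma subring_zero: "subring R \<Longrightarrow> 0 \<in> R"
  by (metis add.right_inverse subring_add subring_one subring_uminus)

lemma subring_diff: "subring R \<Longrightarrow> x \<in> R \<Longrightarrow> y \<in> R \<Longrightarrow> x - y \<in> R"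
  by (metis diff_conv_add_uminus subring_add subring_uminus)

lemma subring_power: "subring R \<Longrightarrow> x \<in> R \<Longrightarrow> x ^ k \<in> R"
  by (induction k) (auto simp: subring_one subring_mult)

lemma submod_zero: "submod R M \<Longrightarrow> 0 \<in> M"
  and submod_add: "submod R M \<Longrightarrow> x \<in> M \<Longrightarrow> y \<in> M \<Longrightarrow> x + y \<in> M"
  and submod_smult: "submod R M \<Longrightarrow> r \<in> R \<Longrightarrow> x \<in> M \<Longrightarrow> r * x \<in> M"
  unfolding submod_def by auto

lemma submod_diff: "subring R \<Longrightarrow> submod R M \<Longrightarrow> x \<in> M \<Longrightarrow> y \<in> M \<Longrightarrow> x - y \<in> M"
  by (metis diff_conv_add_uminus mult_minus1 submod_add submod_smult subring_one subring_uminus)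

lemma submod_sum: "submod R M \<Longrightarrow> (\<And>l. l \<in> A \<Longrightarrow> f l \<in> M) \<Longrightarrow> sum f A \<in> M"
  by (induction A rule: infinite_finite_induct) (auto simp: submod_zero submod_add)

lemma submod_colon: "submod R M \<Longrightarrow> submod R (colon M X)"
  unfolding submod_def colon_def by (auto simp: distrib_right mult.assoc)

lemma ideal_of_refl: "subring R \<Longrightarrow> ideal_of R R"
  unfolding ideal_of_def submod_def by (auto simp: subring_zero subring_add subring_mult)

lemma ideal_of_mult: "ideal_of R N \<Longrightarrow> r \<in> R \<Longrightarrow> x \<in> N \<Longrightarrow> r * x \<in> N"
  unfolding ideal_of_def submod_def by blast

lemma ideal_eq_if_one_mem: "ideal_of S N \<Longrightarrow> 1 \<in> N \<Longrightarrow> N = S"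
  unfolding ideal_of_def by (metis mult.right_neutral submod_smult subset_antisym subsetI)

lemma one_notin_maximal_ideal: "maximal_ideal S M \<Longrightarrow> 1 \<notin> M"
  unfolding maximal_ideal_def using ideal_eq_if_one_mem by blast

lemma set_take_conv_nth: "set (take r xs) = {xs ! p | p. p < r \<and> p < length xs}"
  by (fastforce simp: in_set_conv_nth)

lemma set_drop_conv_nth: "set (drop r xs) = {xs ! p | p. r \<le> p \<and> p < length xs}"
proof safe
  fix x assume "x \<in> set (drop r xs)"
  then obtain k where "k < length xs - r" "x = xs ! (r + k)"
    by (auto simp: in_set_conv_nth)
  then show "\<exists>p. x = xs ! p \<and> r \<le> p \<and> p < length xs" by (intro exI[of _ "r + k"]) auto
next
  fix p assume "r \<le> p" "p < length xs"
  then show "xs ! p \<in> set (drop r xs)"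
    using nth_mem[of "p - r" "drop r xs"] by simp
qed

lemma set_remove_nth:
  assumes "j < length xs"
  shows "set (take j xs @ drop (Suc j) xs) = {xs ! p | p. p < length xs \<and> p \<noteq> j}"
proof -
  have "{p. p < length xs \<and> p \<noteq> j} = {p. p < j \<and> p < length xs} \<union> {p. Suc j \<le> p \<and> p < length xs}"
    using assms by auto
  then show ?thesis unfolding set_append set_take_conv_nth set_drop_conv_nth by blast
qed

subsection \<open>Linear combinations\<close>

definition lincomb :: "(nat \<Rightarrow> 'a::comm_ring_1) \<Rightarrow> 'a list \<Rightarrow> 'a" where
  "lincomb c xs = (\<Sum>l<length xs. c l * xs ! l)"

lemma lincomb_mem:
  "submod R M \<Longrightarrow> (\<And>l. l < length xs \<Longrightarrow> c l * xs ! l \<in> M) \<Longrightarrow> lincomb c xs \<in> M"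
  unfolding lincomb_def by (rule submod_sum) auto

lemma lincomb_single: "p < length xs \<Longrightarrow> lincomb (\<lambda>l. if l = p then v else 0) xs = v * xs ! p"
  unfolding lincomb_def
  by (subst sum.cong[OF refl, where h = "\<lambda>l. if l = p then v * xs ! l else 0"]) auto

lemma lincomb_split: "j < length xs \<Longrightarrow> lincomb c xs = c j * xs ! j + lincomb (c(j := 0)) xs"
  unfolding lincomb_def by (simp add: sum.remove[of _ j] sum.cong[of _ _ "\<lambda>l. (c(j := 0)) l * xs ! l"])

lemma lincomb_smult: "lincomb (\<lambda>l. v * c l) xs = v * lincomb c xs"
  unfolding lincomb_def by (simp add: sum_distrib_left mult.assoc)

lemma lincomb_update_zero:
  assumes "c j = 0"
  shows "lincomb c (xs[j := v]) = lincomb c xs"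
proof -
  have "c l * xs[j := v] ! l = c l * xs ! l" for l
    using assms by (cases "l = j") auto
  then show ?thesis unfolding lincomb_def by simp
qed

definition lincombs :: "'a::comm_ring_1 set \<Rightarrow> 'a set \<Rightarrow> 'a list \<Rightarrow> nat \<Rightarrow> 'a set" where
  "lincombs R N xs r = {lincomb c xs | c. (\<forall>l<length xs. c l \<in> R) \<and> (\<forall>l<r. c l \<in> N)}"

lemma lincombs_submod:
  assumes R: "subring R" and N: "ideal_of R N"
  shows "submod R (lincombs R N xs r)"
  unfolding submod_def
proof (intro conjI ballI)
  show "0 \<in> lincombs R N xs r"
    unfolding lincombs_def using subring_zero[OF R] submod_zero N
    by (intro CollectI exI[of _ "\<lambda>_. 0"]) (auto simp: lincomb_def ideal_of_def)
next
  fix x y assume "x \<in> lincombs R N xs r" "y \<in> lincombs R N xs r"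
  then obtain a b where "x = lincomb a xs" "y = lincomb b xs"
    "\<forall>l<length xs. a l \<in> R \<and> b l \<in> R" "\<forall>l<r. a l \<in> N \<and> b l \<in> N"
    unfolding lincombs_def by blast
  then show "x + y \<in> lincombs R N xs r"
    using R N unfolding lincombs_def ideal_of_def
    by (intro CollectI exI[of _ "\<lambda>l. a l + b l"])
      (auto simp: lincomb_def sum.distrib distrib_right subring_add submod_add)
next
  fix v x assume "v \<in> R" "x \<in> lincombs R N xs r"
  then obtain a where "x = lincomb a xs" "\<forall>l<length xs. a l \<in> R" "\<forall>l<r. a l \<in> N"
    unfolding lincombs_def by blast
  then show "v * x \<in> lincombs R N xs r"
    using R N \<open>v \<in> R\<close> unfolding lincombs_def
    by (intro CollectI exI[of _ "\<lambda>l. v * a l"]) (auto simp: lincomb_smult subring_mult ideal_of_mult)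
qed

lemma single_mem_lincombs:
  assumes "subring R" "ideal_of R N" "p < length xs" "v \<in> R" "p < r \<Longrightarrow> v \<in> N"
  shows "v * xs ! p \<in> lincombs R N xs r"
  using assms lincomb_single[of p xs v] subring_zero submod_zero[of R N]
  unfolding lincombs_def ideal_of_def
  by (intro CollectI exI[of _ "\<lambda>l. if l = p then v else 0"]) auto

lemma gen_set_eq_lincombs:
  assumes R: "subring R"
  shows "gen R (set xs) = lincombs R R xs 0"
proof
  show "gen R (set xs) \<subseteq> lincombs R R xs 0"
  proof (rule gen_minimal[OF lincombs_submod[OF R ideal_of_refl[OF R]]], rule subsetI)
    fix y assume "y \<in> set xs"
    then obtain p where "p < length xs" "y = 1 * xs ! p" by (auto simp: in_set_conv_nth)
    then show "y \<in> lincombs R R xs 0"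
      using single_mem_lincombs[OF R ideal_of_refl[OF R]] subring_one[OF R] by blast
  qed
  show "lincombs R R xs 0 \<subseteq> gen R (set xs)"
  proof
    fix y assume "y \<in> lincombs R R xs 0"
    then obtain c where y: "y = lincomb c xs" and c: "\<forall>l<length xs. c l \<in> R"
      unfolding lincombs_def by blast
    show "y \<in> gen R (set xs)"
      unfolding y using c
      by (intro lincomb_mem[OF submod_gen] submod_smult[OF submod_gen] gen_mem[OF nth_mem])
        auto
  qed
qed

lemma lincomb_mem_gen:
  "subring R \<Longrightarrow> \<forall>l<length xs. c l \<in> R \<Longrightarrow> lincomb c xs \<in> gen R (set xs)"
  unfolding gen_set_eq_lincombs lincombs_def by blast

abbreviation square_tail_ideal :: "'a::comm_ring_1 set \<Rightarrow> 'a list \<Rightarrow> nat \<Rightarrow> 'a set" where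
  "square_tail_ideal R xs r \<equiv> ideal_sum R
     (ideal_prod R (gen R (set (take r xs))) (gen R (set (take r xs)))) (gen R (set (drop r xs)))"

lemma square_tail_ideal_subset_lincombs:
  assumes R: "subring R" and m: "ideal_of R m" and g: "gen R (set xs) = m"
  shows "square_tail_ideal R xs r \<subseteq> lincombs R m xs r" (is "_ \<subseteq> ?L")
proof -
  have L: "submod R ?L" using lincombs_submod[OF R m] .
  have mR: "m \<subseteq> R" using m unfolding ideal_of_def by blast
  have head_m: "gen R (set (take r xs)) \<subseteq> m"
    using gen_mono[OF set_take_subset] g by blast
  have "set (take r xs) \<subseteq> colon ?L m"
  proof
    fix y assume "y \<in> set (take r xs)"
    then obtain p where "y = xs ! p" "p < r" "p < length xs" unfolding set_take_conv_nth by blast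
    then show "y \<in> colon ?L m"
      unfolding colon_def using single_mem_lincombs[OF R m] mR by (auto simp: mult.commute)
  qed
  then have "gen R (set (take r xs)) \<subseteq> colon ?L m"
    by (rule gen_minimal[OF submod_colon[OF L]])
  then have "ideal_prod R (gen R (set (take r xs))) (gen R (set (take r xs))) \<subseteq> ?L"
    unfolding ideal_prod_def colon_def using head_m by (intro gen_minimal[OF L]) blast
  moreover have "gen R (set (drop r xs)) \<subseteq> ?L"
  proof (rule gen_minimal[OF L], rule subsetI)
    fix y assume "y \<in> set (drop r xs)"
    then obtain p where "y = 1 * xs ! p" "r \<le> p" "p < length xs" unfolding set_drop_conv_nth by auto
    then show "y \<in> ?L" using single_mem_lincombs[OF R m _ subring_one[OF R]] by simp
  qed
  ultimately show ?thesis
    unfolding ideal_sum_def by (intro gen_minimal[OF L]) blast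
qed

lemma nth_mem_square_tail_ideal:
  assumes "r \<le> l" "l < length xs"
  shows "xs ! l \<in> square_tail_ideal R xs r"
proof -
  have "xs ! l \<in> set (drop r xs)" using assms unfolding set_drop_conv_nth by blast
  then have "xs ! l \<in> gen R (set (drop r xs))" by (rule gen_mem)
  then show ?thesis unfolding ideal_sum_def by (rule gen_mem[OF UnI2])
qed

lemma nth_mult_mem_square_tail_ideal:
  assumes "p < r" "l < r" "p < length xs" "l < length xs"
  shows "xs ! p * xs ! l \<in> square_tail_ideal R xs r"
proof -
  have "xs ! p \<in> set (take r xs)" "xs ! l \<in> set (take r xs)"
    using assms unfolding set_take_conv_nth by blast+
  then have "xs ! p \<in> gen R (set (take r xs))" "xs ! l \<in> gen R (set (take r xs))"
    by (auto intro: gen_mem)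
  then have "xs ! p * xs ! l \<in> ideal_prod R (gen R (set (take r xs))) (gen R (set (take r xs)))"
    unfolding ideal_prod_def by (blast intro: gen_mem)
  then show ?thesis unfolding ideal_sum_def by (rule gen_mem[OF UnI1])
qed

lemma max_mult_nth_mem_square_tail_ideal:
  assumes m: "ideal_of R m" and g: "gen R (set xs) = m" and l: "l < r" "l < length xs"
    and c: "c \<in> m"
  shows "c * xs ! l \<in> square_tail_ideal R xs r" (is "_ \<in> ?T")
proof -
  have T: "submod R ?T" unfolding ideal_sum_def by (rule submod_gen)
  have xl: "xs ! l \<in> R" using gen_mem[OF nth_mem[OF l(2)], of R] g m unfolding ideal_of_def by blast
  have "set xs \<subseteq> colon ?T {xs ! l}"
  proof
    fix y assume "y \<in> set xs"
    then obtain p where p: "p < length xs" "y = xs ! p" by (auto simp: in_set_conv_nth)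
    show "y \<in> colon ?T {xs ! l}"
    proof (cases "p < r")
      case True
      then show ?thesis using nth_mult_mem_square_tail_ideal[OF True l(1) p(1) l(2)] p(2)
        unfolding colon_def by simp
    next
      case False
      then have "xs ! l * xs ! p \<in> ?T"
        using submod_smult[OF T xl nth_mem_square_tail_ideal] p by simp
      then show ?thesis using p(2) unfolding colon_def by (simp add: mult.commute)
    qed
  qed
  then have "m \<subseteq> colon ?T {xs ! l}" using gen_minimal[OF submod_colon[OF T]] g by blast
  then show ?thesis using c unfolding colon_def by blast
qed

lemma lincombs_subset_square_tail_ideal:
  assumes m: "ideal_of R m" and g: "gen R (set xs) = m"
  shows "lincombs R m xs r \<subseteq> square_tail_ideal R xs r" (is "_ \<subseteq> ?T")
proof
  fix z assume "z \<in> lincombs R m xs r"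
  then obtain c where z: "z = lincomb c xs" and c: "\<forall>l<length xs. c l \<in> R" "\<forall>l<r. c l \<in> m"
    unfolding lincombs_def by blast
  have T: "submod R ?T" unfolding ideal_sum_def by (rule submod_gen)
  have "c l * xs ! l \<in> ?T" if l: "l < length xs" for l
  proof (cases "l < r")
    case True
    then show ?thesis using max_mult_nth_mem_square_tail_ideal[OF m g True l] c by blast
  next
    case False
    then have "xs ! l \<in> ?T" using l by (intro nth_mem_square_tail_ideal) simp_all
    then show ?thesis using submod_smult[OF T] l c by blast
  qed
  then show "z \<in> ?T" unfolding z by (rule lincomb_mem[OF T])
qed

lemma square_tail_ideal_eq_lincombs:
  assumes "subring R" "ideal_of R m" "gen R (set xs) = m"
  shows "square_tail_ideal R xs r = lincombs R m xs r"
  using square_tail_ideal_subset_lincombs[OF assms] lincombs_subset_square_tail_ideal[OF assms(2,3)]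
  by (rule subset_antisym)

subsection \<open>Units and maximal ideals\<close>

lemma ideal_principal:
  assumes S: "subring S" and z: "z \<in> S"
  shows "ideal_of S {z * s | s. s \<in> S}"
  unfolding ideal_of_def submod_def
proof (intro conjI ballI)
  show "{z * s | s. s \<in> S} \<subseteq> S" using S z subring_mult by blast
  show "0 \<in> {z * s | s. s \<in> S}" using S subring_zero by force
next
  fix x y assume "x \<in> {z * s | s. s \<in> S}" "y \<in> {z * s | s. s \<in> S}"
  then obtain a b where "x = z * a" "y = z * b" "a \<in> S" "b \<in> S" by blast
  then show "x + y \<in> {z * s | s. s \<in> S}"
    using S subring_add by (intro CollectI exI[of _ "a + b"]) (auto simp: distrib_left)
next
  fix r x assume "r \<in> S" "x \<in> {z * s | s. s \<in> S}"
  then obtain a where "x = z * a" "a \<in> S" by blast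
  then show "r * x \<in> {z * s | s. s \<in> S}"
    using S subring_mult \<open>r \<in> S\<close> by (intro CollectI exI[of _ "r * a"]) (auto simp: mult.left_commute)
qed

lemma ideal_Union_chain:
  assumes "C \<noteq> {}" "\<And>N. N \<in> C \<Longrightarrow> ideal_of S N"
    and chain: "\<And>X Y. X \<in> C \<Longrightarrow> Y \<in> C \<Longrightarrow> X \<subseteq> Y \<or> Y \<subseteq> X"
  shows "ideal_of S (\<Union>C)"
  unfolding ideal_of_def submod_def
proof (intro conjI ballI)
  show "\<Union>C \<subseteq> S" "0 \<in> \<Union>C" using assms unfolding ideal_of_def submod_def by blast+
next
  fix x y assume "x \<in> \<Union>C" "y \<in> \<Union>C"
  then obtain X Y where "X \<in> C" "Y \<in> C" "x \<in> X" "y \<in> Y" by blast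
  with chain[of X Y] obtain Z where "Z \<in> C" "x \<in> Z" "y \<in> Z" by blast
  then show "x + y \<in> \<Union>C" using assms(2) unfolding ideal_of_def by (blast intro: submod_add)
next
  fix r x assume "r \<in> S" "x \<in> \<Union>C"
  then show "r * x \<in> \<Union>C" using assms(2) ideal_of_mult by blast
qed

lemma nonunit_in_maximal_ideal:
  assumes S: "subring S" and z: "z \<in> S" and nonunit: "\<forall>u\<in>S. z * u \<noteq> 1"
  shows "\<exists>M. maximal_ideal S M \<and> z \<in> M"
proof -
  define A where "A = {N. ideal_of S N \<and> 1 \<notin> N \<and> z \<in> N}"
  have "{z * s | s. s \<in> S} \<in> A"
    unfolding A_def using ideal_principal[OF S z] nonunit subring_one[OF S] by force
  moreover have "\<Union>C \<in> A" if "C \<noteq> {}" "subset.chain A C" for C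
    using that ideal_Union_chain[of C S] unfolding A_def subset.chain_def by blast
  ultimately obtain M where M: "M \<in> A" "\<And>N. N \<in> A \<Longrightarrow> M \<subseteq> N \<Longrightarrow> N = M"
    using subset_Zorn_nonempty[of A] by blast
  have "maximal_ideal S M"
    unfolding maximal_ideal_def
  proof (intro conjI allI impI)
    show "ideal_of S M" "M \<noteq> S" using M(1) subring_one[OF S] unfolding A_def by blast+
  next
    fix N assume "ideal_of S N \<and> M \<subseteq> N"
    then show "N = M \<or> N = S"
      using M ideal_eq_if_one_mem[of S N] unfolding A_def by blast
  qed
  then show ?thesis using M(1) unfolding A_def by blast
qed

lemma local_ring_ideal: "local_ring R m \<Longrightarrow> ideal_of R m"
  unfolding local_ring_def maximal_ideal_def by blast

lemma local_ring_one_notin: "local_ring R m \<Longrightarrow> 1 \<notin> m"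
  unfolding local_ring_def using one_notin_maximal_ideal by blast

lemma local_ring_unit:
  assumes "subring R" "local_ring R m" "a \<in> R" "a \<notin> m"
  shows "\<exists>u\<in>R. a * u = 1"
  using assms nonunit_in_maximal_ideal unfolding local_ring_def by blast

lemma local_ring_proper_ideal_subset:
  assumes R: "subring R" and m: "local_ring R m" and N: "ideal_of R N" "N \<noteq> R"
  shows "N \<subseteq> m"
proof
  fix a assume a: "a \<in> N"
  show "a \<in> m"
  proof (rule ccontr)
    assume "a \<notin> m"
    then obtain u where "u \<in> R" "a * u = 1"
      using local_ring_unit[OF R m] a N unfolding ideal_of_def by blast
    then have "1 \<in> N" using ideal_of_mult[OF N(1)] a by (metis mult.commute)
    then show False using ideal_eq_if_one_mem[OF N(1)] N(2) by blast
  qed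
qed

lemma jacobson_diff_unit:
  assumes S: "subring S" and x: "x \<in> S" "x \<in> jacobson S"
    and a: "a \<in> S" "u \<in> S" "a * u = 1"
  shows "\<exists>v\<in>S. (x - a) * v = 1"
proof (rule ccontr)
  assume "\<not> (\<exists>v\<in>S. (x - a) * v = 1)"
  then obtain M where M: "maximal_ideal S M" "x - a \<in> M"
    using nonunit_in_maximal_ideal[OF S] subring_diff[OF S x(1) a(1)] by blast
  have Mid: "ideal_of S M" using M(1) unfolding maximal_ideal_def by blast
  have "x \<in> M" using x(2) M(1) unfolding jacobson_def by blast
  then have "a \<in> M"
    using submod_diff[OF S _ _ M(2)] Mid unfolding ideal_of_def by fastforce
  then have "1 \<in> M" using ideal_of_mult[OF Mid a(2)] a(3) by (metis mult.commute)
  then show False using one_notin_maximal_ideal[OF M(1)] by blast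
qed

lemma one_mem_if_integral_inverse:
  assumes R: "subring R" and N: "ideal_of R N"
    and w: "integral_over R w" and t: "t \<in> N" and wt: "w * t = 1"
  shows "1 \<in> N"
proof -
  obtain p where p: "set p \<subseteq> R" "w ^ length p + (\<Sum>i<length p. p ! i * w ^ i) = 0"
    using w unfolding integral_over_def by blast
  define n where "n = length p"
  have tR: "t \<in> R" using t N unfolding ideal_of_def by blast
  have t_pow: "t ^ n * w ^ i = t ^ (n - i)" if "i \<le> n" for i
  proof -
    have "t ^ n = t ^ (n - i) * t ^ i" using that by (simp flip: power_add)
    then have "t ^ n * w ^ i = t ^ (n - i) * (t * w) ^ i"
      by (simp add: power_mult_distrib mult.assoc)
    then show ?thesis using wt by (simp add: mult.commute)
  qed
  have "0 = t ^ n * (w ^ n + (\<Sum>i<n. p ! i * w ^ i))" using p unfolding n_def by simp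
  also have "\<dots> = 1 + (\<Sum>i<n. p ! i * t ^ (n - i))"
    by (simp add: distrib_left sum_distrib_left mult.left_commute t_pow)
  finally have one: "1 = - (\<Sum>i<n. p ! i * t ^ (n - i))" by (simp add: eq_neg_iff_add_eq_0)
  have "p ! i * t ^ (n - i) \<in> N" if "i < n" for i
  proof -
    have "t ^ (n - i) = t ^ (n - Suc i) * t" using that by (metis Suc_diff_Suc power_Suc2)
    moreover have "t ^ (n - Suc i) \<in> R" using subring_power[OF R tR] .
    moreover have "p ! i \<in> R" using p(1) that unfolding n_def by auto
    ultimately show ?thesis using ideal_of_mult[OF N] t R subring_mult by (metis mult.assoc)
  qed
  then have "(\<Sum>i<n. p ! i * t ^ (n - i)) \<in> N"
    using N unfolding ideal_of_def by (blast intro: submod_sum)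
  then show ?thesis
    using one submod_smult[of R N "- 1"] N subring_uminus[OF R subring_one[OF R]]
    unfolding ideal_of_def by (metis mult_minus1)
qed

subsection \<open>Minimal generating systems\<close>

lemma min_gens_exists:
  assumes "noetherian R" "ideal_of R m"
  shows "\<exists>xs. min_gens R m xs"
proof -
  obtain F where "finite F" "F \<subseteq> m" "gen R F = m" using assms unfolding noetherian_def by blast
  then obtain xs0 where "set xs0 \<subseteq> m \<and> gen R (set xs0) = m" using finite_list by metis
  then obtain xs where "set xs \<subseteq> m \<and> gen R (set xs) = m"
    "\<forall>ys. set ys \<subseteq> m \<and> gen R (set ys) = m \<longrightarrow> length xs \<le> length ys"
    using ex_has_least_nat[of "\<lambda>ys. set ys \<subseteq> m \<and> gen R (set ys) = m" xs0 length] by blast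
  then show ?thesis unfolding min_gens_def by blast
qed

lemma min_gens_swap:
  "min_gens R m xs \<Longrightarrow> i < length xs \<Longrightarrow> j < length xs \<Longrightarrow> min_gens R m (xs[i := xs ! j, j := xs ! i])"
  unfolding min_gens_def by simp

lemma min_gens_nth_notin_gen_remove:
  assumes xs: "min_gens R m xs" and j: "j < length xs"
  shows "xs ! j \<notin> gen R (set (take j xs @ drop (Suc j) xs))"
proof
  define ys where "ys = take j xs @ drop (Suc j) xs"
  assume "xs ! j \<in> gen R (set (take j xs @ drop (Suc j) xs))"
  then have "set xs \<subseteq> gen R (set ys)"
    unfolding ys_def id_take_nth_drop[OF j, THEN arg_cong[where f = set]]
    by (auto intro: gen_mem)
  moreover have "set ys \<subseteq> set xs" unfolding ys_def using set_take_subset set_drop_subset by fastforce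
  moreover have g: "gen R (set xs) = m" "set xs \<subseteq> m" using xs unfolding min_gens_def by blast+
  ultimately have "gen R (set ys) = m" "set ys \<subseteq> m"
    using gen_minimal[OF submod_gen, of "set xs" R "set ys"] gen_mono[of "set ys" "set xs" R] by blast+
  then have "length xs \<le> length ys" using xs unfolding min_gens_def by blast
  then show False using j unfolding ys_def by simp
qed

lemma min_gens_nth_ne_lincomb:
  assumes R: "subring R" and L: "local_ring R m" and xs: "min_gens R m xs" and j: "j < length xs"
    and c: "\<forall>l<length xs. c l \<in> R" "c j \<in> m"
  shows "xs ! j \<noteq> lincomb c xs"
proof
  assume xj: "xs ! j = lincomb c xs"
  have "1 - c j \<in> R" using c j R subring_diff subring_one by blast
  moreover have "1 - c j \<notin> m"
  proof
    assume "1 - c j \<in> m"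
    then have "(1 - c j) + c j \<in> m"
      using c(2) local_ring_ideal[OF L] unfolding ideal_of_def by (blast intro: submod_add)
    then show False using local_ring_one_notin[OF L] by simp
  qed
  ultimately obtain u where u: "u \<in> R" "(1 - c j) * u = 1"
    using local_ring_unit[OF R L] by blast
  have "(1 - c j) * xs ! j = lincomb (c(j := 0)) xs"
    using xj lincomb_split[OF j, of c] by (simp add: algebra_simps)
  then have xj': "xs ! j = lincomb (\<lambda>l. u * (c(j := 0)) l) xs"
    using u(2) by (metis lincomb_smult mult.assoc mult.commute mult_1)
  have "xs ! j \<in> gen R (set (take j xs @ drop (Suc j) xs))" (is "_ \<in> gen R ?ys")
    unfolding xj'
  proof (rule lincomb_mem[OF submod_gen])
    fix l assume l: "l < length xs"
    show "u * (c(j := 0)) l * xs ! l \<in> gen R ?ys"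
    proof (cases "l = j")
      case True
      then show ?thesis using submod_zero[OF submod_gen] by simp
    next
      case False
      then have "xs ! l \<in> ?ys" using l unfolding set_remove_nth[OF j] by blast
      then have "xs ! l \<in> gen R ?ys" by (rule gen_mem)
      then show ?thesis
        using False c(1) u(1) l by (simp add: submod_smult[OF submod_gen] subring_mult[OF R])
    qed
  qed
  then show False using min_gens_nth_notin_gen_remove[OF xs j] by blast
qed

lemma min_gens_exchange:
  assumes R: "subring R" and L: "local_ring R m" and xs: "min_gens R m xs" and l: "l < length xs"
    and a: "\<forall>p<length xs. a p \<in> R" "a l \<notin> m"
  shows "min_gens R m (xs[l := lincomb a xs])"
proof -
  let ?v = "lincomb a xs" and ?ys = "xs[l := lincomb a xs]"
  have g: "gen R (set xs) = m" and xsm: "set xs \<subseteq> m" using xs unfolding min_gens_def by blast+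
  have m: "submod R m" using local_ring_ideal[OF L] unfolding ideal_of_def by blast
  obtain u where u: "u \<in> R" "a l * u = 1" using local_ring_unit[OF R L] a l by blast
  have "?v \<in> m" using lincomb_mem_gen[OF R a(1)] g by simp
  then have ysm: "set ?ys \<subseteq> m" using xsm set_update_subset_insert[of xs l ?v] by blast
  have "u * ?v = (a l * u) * xs ! l + u * lincomb (a(l := 0)) xs"
    using lincomb_split[OF l, of a] by (simp add: algebra_simps)
  then have xl: "xs ! l = u * ?v - u * lincomb (a(l := 0)) ?ys"
    using u(2) by (simp add: lincomb_update_zero)
  have "u * ?v \<in> gen R (set ?ys)"
    using l by (intro submod_smult[OF submod_gen u(1)] gen_mem) (simp add: set_update_memI)
  moreover have "u * lincomb (a(l := 0)) ?ys \<in> gen R (set ?ys)"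
    using a(1) by (intro submod_smult[OF submod_gen u(1)] lincomb_mem_gen[OF R])
      (simp add: subring_zero[OF R])
  ultimately have "xs ! l \<in> gen R (set ?ys)"
    unfolding xl by (rule submod_diff[OF R submod_gen])
  have xs_ys: "set xs \<subseteq> gen R (set ?ys)"
  proof
    fix y assume "y \<in> set xs"
    then obtain p where p: "p < length xs" "y = xs ! p" by (auto simp: in_set_conv_nth)
    show "y \<in> gen R (set ?ys)"
    proof (cases "p = l")
      case False
      then have "y \<in> set ?ys" using p by (metis length_list_update nth_list_update_neq nth_mem)
      then show ?thesis by (rule gen_mem)
    qed (use p \<open>xs ! l \<in> gen R (set ?ys)\<close> in simp)
  qed
  have "gen R (set ?ys) = m"
    using gen_minimal[OF submod_gen xs_ys] gen_minimal[OF m ysm] g by blast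
  then show ?thesis using xs ysm unfolding min_gens_def by simp
qed

lemma no_relation_if_mem_colon:
  assumes R: "subring R" and L: "local_ring R m" and xs: "min_gens R m xs" and r: "r \<le> length xs"
    and K: "K = square_tail_ideal R xs r" and x: "x \<in> colon K m" and ij: "i < r" "j < r"
  shows "xs ! j \<noteq> x * xs ! i"
proof
  assume rel: "xs ! j = x * xs ! i"
  have m: "ideal_of R m" using local_ring_ideal[OF L] .
  have g: "gen R (set xs) = m" using xs unfolding min_gens_def by blast
  have "xs ! i \<in> m" using xs ij r nth_mem[of i xs] unfolding min_gens_def by auto
  then have "xs ! j \<in> lincombs R m xs r"
    using x rel K square_tail_ideal_eq_lincombs[OF R m g] unfolding colon_def by auto
  then obtain c where "xs ! j = lincomb c xs" "\<forall>l<length xs. c l \<in> R" "c j \<in> m"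
    using ij unfolding lincombs_def by blast
  then show False using min_gens_nth_ne_lincomb[OF R L xs] ij r by simp
qed

subsection \<open>The colon ideal \<open>R : \<omega>\<close>\<close>

lemma subring_colon_self:
  assumes R: "subring R" and m: "ideal_of R m"
  shows "subring (colon m m)"
  using m submod_smult[of R m "- 1"] subring_uminus[OF R subring_one[OF R]]
  unfolding subring_def colon_def ideal_of_def
  by (auto simp: distrib_right mult.assoc submod_add)

lemma subset_colon_self: "ideal_of R m \<Longrightarrow> R \<subseteq> colon m m"
  unfolding colon_def using ideal_of_mult by blast

locale colon_setting =
  fixes R m \<omega> :: "'a::comm_ring_1 set"
  assumes subring: "subring R"
    and noetherian: "noetherian R"
    and local: "local_ring R m"
    and subset_omega: "R \<subseteq> \<omega>"
    and omega_integral: "\<omega> \<subseteq> int_closure R"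
    and max_sq_subset: "ideal_prod R m m \<subseteq> colon R \<omega>"
    and colon_proper: "colon R \<omega> \<noteq> R"
begin

lemma max_ideal: "ideal_of R m"
  using local_ring_ideal[OF local] .

lemma max_subset: "m \<subseteq> R"
  using max_ideal unfolding ideal_of_def by blast

lemma colon_ideal: "ideal_of R (colon R \<omega>)"
proof -
  have "colon R \<omega> \<subseteq> R" unfolding colon_def using subset_omega subring_one[OF subring] by force
  moreover have "submod R (colon R \<omega>)"
    using submod_colon ideal_of_refl[OF subring] unfolding ideal_of_def by blast
  ultimately show ?thesis unfolding ideal_of_def by blast
qed

lemma colon_subset_max: "colon R \<omega> \<subseteq> m"
  using local_ring_proper_ideal_subset[OF subring local colon_ideal colon_proper] .

lemma mult_mem_colon:
  assumes "a \<in> m" "b \<in> m"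
  shows "a * b \<in> colon R \<omega>"
proof -
  have "a * b \<in> {a * b | a b. a \<in> m \<and> b \<in> m}" using assms by blast
  then have "a * b \<in> ideal_prod R m m" unfolding ideal_prod_def by (rule gen_mem)
  then show ?thesis using max_sq_subset by blast
qed

lemma colon_mult_mem_max:
  assumes k: "k \<in> colon R \<omega>" and w: "w \<in> \<omega>"
  shows "k * w \<in> m"
proof (rule ccontr)
  assume "k * w \<notin> m"
  moreover have "k * w \<in> R" using k w unfolding colon_def by blast
  ultimately obtain e where e: "e \<in> R" "k * w * e = 1" using local_ring_unit[OF subring local] by blast
  have "k * e \<in> m" using colon_subset_max ideal_of_mult[OF colon_ideal e(1) k] by (auto simp: mult.commute)
  moreover have "w * (k * e) = 1" using e(2) by (simp add: mult_ac)
  moreover have "integral_over R w" using w omega_integral unfolding int_closure_def by blast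
  ultimately have "1 \<in> m" using one_mem_if_integral_inverse[OF subring max_ideal] by blast
  then show False using local_ring_one_notin[OF local] by blast
qed

lemma endo_mult_mem_colon:
  assumes "b \<in> colon m m" "k \<in> colon R \<omega>"
  shows "b * k \<in> colon R \<omega>"
proof -
  have "b * (k * w) \<in> R" if "w \<in> \<omega>" for w
    using assms(1) colon_mult_mem_max[OF assms(2) that] max_subset unfolding colon_def by blast
  then show ?thesis unfolding colon_def by (simp add: mult.assoc)
qed

lemma lincombs_subset_colon:
  assumes g: "gen R (set xs) = m" and tail: "set (drop r xs) \<subseteq> colon R \<omega>"
  shows "lincombs R m xs r \<subseteq> colon R \<omega>"
proof
  fix z assume "z \<in> lincombs R m xs r"
  then obtain c where z: "z = lincomb c xs" and c: "\<forall>l<length xs. c l \<in> R" "\<forall>l<r. c l \<in> m"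
    unfolding lincombs_def by blast
  have xs_m: "xs ! l \<in> m" if "l < length xs" for l
    using gen_mem[OF nth_mem[OF that], of R] g by simp
  have "c l * xs ! l \<in> colon R \<omega>" if l: "l < length xs" for l
  proof (cases "l < r")
    case True
    then show ?thesis using mult_mem_colon c xs_m l by blast
  next
    case False
    then have "r \<le> l" by simp
    then have "xs ! l \<in> colon R \<omega>" using tail l unfolding set_drop_conv_nth by blast
    then show ?thesis using ideal_of_mult[OF colon_ideal] c l by blast
  qed
  then show "z \<in> colon R \<omega>"
    unfolding z using colon_ideal unfolding ideal_of_def by (blast intro: lincomb_mem[of R])
qed

definition adapted :: "'a list \<Rightarrow> nat \<Rightarrow> bool" where
  "adapted xs r \<longleftrightarrow> min_gens R m xs \<and> r \<le> length xs \<and> set (drop r xs) \<subseteq> colon R \<omega>"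

text \<open>Minimising the number of leading generators outside \<open>R : \<omega>\<close> makes the trailing ones
  lift a basis of \<open>(R : \<omega>) / m\<^sup>2\<close>, without having to speak about the residue field.\<close>
definition head_length :: nat where
  "head_length = (LEAST r. \<exists>xs. adapted xs r)"

lemma adapted_exists: "\<exists>xs. adapted xs head_length"
proof -
  obtain xs where "min_gens R m xs" using min_gens_exists[OF noetherian max_ideal] by blast
  then have "adapted xs (length xs)" unfolding adapted_def by simp
  then show ?thesis unfolding head_length_def using LeastI_ex[of "\<lambda>r. \<exists>xs. adapted xs r"] by blast
qed

lemma adapted_head_notin:
  assumes xs: "adapted xs head_length" and i: "i < head_length"
  shows "xs ! i \<notin> colon R \<omega>"
proof
  assume xi: "xs ! i \<in> colon R \<omega>"
  define r where "r = head_length - 1"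
  have r: "r < length xs" "i \<le> r" "Suc r = head_length" using xs i unfolding adapted_def r_def by auto
  define ys where "ys = xs[i := xs ! r, r := xs ! i]"
  have "drop r ys = xs ! i # drop head_length xs"
    unfolding ys_def using r by (simp add: Cons_nth_drop_Suc[symmetric])
  then have "adapted ys r"
    using xs xi r min_gens_swap[of R m xs i r] unfolding adapted_def ys_def by auto
  then have "head_length \<le> r" unfolding head_length_def by (rule Least_le[OF exI])
  then show False using r by simp
qed

lemma adapted_exchange:
  assumes xs: "adapted xs head_length" and l: "l < head_length"
    and a: "\<forall>p<length xs. a p \<in> R" "a l \<notin> m"
  shows "adapted (xs[l := lincomb a xs]) head_length"
  using xs l min_gens_exchange[OF subring local _ _ a] unfolding adapted_def by auto

lemma adapted_coeff_mem:
  assumes xs: "adapted xs head_length" and k: "lincomb a xs \<in> colon R \<omega>"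
    and a: "\<forall>p<length xs. a p \<in> R" and l: "l < head_length"
  shows "a l \<in> m"
proof (rule ccontr)
  assume "a l \<notin> m"
  then have "adapted (xs[l := lincomb a xs]) head_length" using adapted_exchange[OF xs l a] by blast
  moreover have "xs[l := lincomb a xs] ! l \<in> colon R \<omega>" using k xs l unfolding adapted_def by simp
  ultimately show False using adapted_head_notin l by blast
qed

lemma adapted_colon_eq_lincombs:
  assumes xs: "adapted xs head_length"
  shows "colon R \<omega> = lincombs R m xs head_length"
proof
  have g: "gen R (set xs) = m" using xs unfolding adapted_def min_gens_def by blast
  show "lincombs R m xs head_length \<subseteq> colon R \<omega>"
    using lincombs_subset_colon[OF g] xs unfolding adapted_def by blast
  show "colon R \<omega> \<subseteq> lincombs R m xs head_length"
  proof
    fix k assume k: "k \<in> colon R \<omega>"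
    then have "k \<in> gen R (set xs)" using colon_subset_max g by blast
    then obtain a where a: "k = lincomb a xs" "\<forall>p<length xs. a p \<in> R"
      unfolding gen_set_eq_lincombs[OF subring] lincombs_def by blast
    then have "\<forall>l<head_length. a l \<in> m" using adapted_coeff_mem[OF xs] k by blast
    then show "k \<in> lincombs R m xs head_length" using a unfolding lincombs_def by blast
  qed
qed

lemma adapted_colon_eq_square_tail:
  assumes "adapted xs head_length"
  shows "colon R \<omega> = square_tail_ideal R xs head_length"
  using assms adapted_colon_eq_lincombs square_tail_ideal_eq_lincombs[OF subring max_ideal]
  unfolding adapted_def min_gens_def by simp

lemma adapted_mult_notin:
  assumes xs: "adapted xs head_length" and x: "x \<in> colon m m" "x \<notin> colon (colon R \<omega>) m"
  shows "\<exists>i<head_length. x * xs ! i \<notin> colon R \<omega>"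
proof (rule ccontr)
  assume head: "\<not> (\<exists>i<head_length. x * xs ! i \<notin> colon R \<omega>)"
  have "set xs \<subseteq> colon (colon R \<omega>) {x}"
  proof
    fix y assume "y \<in> set xs"
    then obtain p where p: "p < length xs" "y = xs ! p" by (auto simp: in_set_conv_nth)
    show "y \<in> colon (colon R \<omega>) {x}"
    proof (cases "p < head_length")
      case True
      then show ?thesis using head p unfolding colon_def by (simp add: mult.commute)
    next
      case False
      then have "head_length \<le> p" by simp
      then have "xs ! p \<in> colon R \<omega>" using xs p unfolding adapted_def set_drop_conv_nth by blast
      then have "x * xs ! p \<in> colon R \<omega>" by (rule endo_mult_mem_colon[OF x(1)])
      then show ?thesis using p unfolding colon_def by (simp add: mult.commute)
    qed
  qed
  then have "m \<subseteq> colon (colon R \<omega>) {x}"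
    using gen_minimal[OF submod_colon] colon_ideal xs
    unfolding ideal_of_def adapted_def min_gens_def by blast
  then show False using x(2) unfolding colon_def by (auto simp: mult.commute)
qed

lemma adapted_diagonal_mult_mem_colon:
  assumes xs: "adapted xs head_length" and x: "x \<in> colon m m" "x \<in> jacobson (colon m m)"
    and i: "i < head_length" and a: "x * xs ! i = lincomb a xs" "\<forall>p<length xs. a p \<in> R"
    and off_diagonal: "\<forall>l<head_length. l \<noteq> i \<longrightarrow> a l \<in> m"
  shows "x * xs ! i \<in> colon R \<omega>"
proof (cases "a i \<in> m")
  case True
  then have "x * xs ! i \<in> lincombs R m xs head_length"
    using off_diagonal a unfolding lincombs_def by auto
  then show ?thesis using adapted_colon_eq_lincombs[OF xs] by simp
next
  case False
  have il: "i < length xs" using i xs unfolding adapted_def by simp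
  have "0 \<in> m" using max_ideal unfolding ideal_of_def by (blast intro: submod_zero)
  then have "lincomb (a(i := 0)) xs \<in> lincombs R m xs head_length"
    using off_diagonal a(2) subring_zero[OF subring] unfolding lincombs_def
    by (intro CollectI exI[of _ "a(i := 0)"]) auto
  then have "lincomb (a(i := 0)) xs \<in> colon R \<omega>" using adapted_colon_eq_lincombs[OF xs] by simp
  then have diag: "(x - a i) * xs ! i \<in> colon R \<omega>"
    using a(1) lincomb_split[OF il, of a] by (simp add: algebra_simps)
  obtain u where u: "u \<in> R" "a i * u = 1" using local_ring_unit[OF subring local] a(2) il False by blast
  obtain v where v: "v \<in> colon m m" "(x - a i) * v = 1"
    using jacobson_diff_unit[OF subring_colon_self[OF subring max_ideal] x] u a(2) il
      subset_colon_self[OF max_ideal] by blast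
  have "xs ! i = ((x - a i) * v) * xs ! i" using v(2) by simp
  also have "\<dots> = v * ((x - a i) * xs ! i)" by (simp add: mult_ac)
  finally have "xs ! i \<in> colon R \<omega>" using endo_mult_mem_colon[OF v(1) diag] by simp
  then show ?thesis using adapted_head_notin[OF xs i] by blast
qed

lemma mem_colon_if_no_relation:
  assumes x: "x \<in> colon m m" "x \<in> jacobson (colon m m)"
    and no_relation: "\<And>xs r i j. min_gens R m xs \<Longrightarrow> r \<le> length xs \<Longrightarrow>
      colon R \<omega> = square_tail_ideal R xs r \<Longrightarrow> i < r \<Longrightarrow> j < r \<Longrightarrow> xs ! j \<noteq> x * xs ! i"
  shows "x \<in> colon (colon R \<omega>) m"
proof (rule ccontr)
  assume "x \<notin> colon (colon R \<omega>) m"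
  obtain xs where xs: "adapted xs head_length" using adapted_exists by blast
  then have g: "gen R (set xs) = m" and len: "head_length \<le> length xs"
    unfolding adapted_def min_gens_def by blast+
  obtain i where i: "i < head_length" "x * xs ! i \<notin> colon R \<omega>"
    using adapted_mult_notin[OF xs x(1) \<open>x \<notin> _\<close>] by blast
  have "x * xs ! i \<in> gen R (set xs)"
    using x(1) gen_mem[OF nth_mem, of i xs R] i len g unfolding colon_def by simp
  then obtain a where a: "x * xs ! i = lincomb a xs" "\<forall>p<length xs. a p \<in> R"
    unfolding gen_set_eq_lincombs[OF subring] lincombs_def by blast
  then obtain l where l: "l < head_length" "l \<noteq> i" "a l \<notin> m"
    using adapted_diagonal_mult_mem_colon[OF xs x i(1)] i(2) by blast
  let ?ys = "xs[l := x * xs ! i]"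
  have ys: "adapted ?ys head_length" using adapted_exchange[OF xs l(1) a(2) l(3)] a(1) by simp
  moreover have "?ys ! l = x * ?ys ! i" using l len by simp
  ultimately show False
    using no_relation adapted_colon_eq_square_tail[OF ys] i l unfolding adapted_def by blast
qed
end

theorem lemma2p2:
  fixes R m \<omega> I :: "'a::comm_ring_1 set"
  assumes "total_ring_of_fractions R"
    and "cohen_macaulay_local R m"
    and "krull_dim_one R"
    and "canonical_ideal R \<omega>"
    and "R \<subseteq> \<omega>" and "\<omega> \<subseteq> int_closure R"
    and "ideal_prod R m m \<subseteq> colon R \<omega>"
    and "ideal_of (colon m m) I"
    and "I \<subseteq> jacobson (colon m m)"
  shows "(\<forall>xs r. min_gens R m xs \<and> r \<le> length xs \<and>
            colon R \<omega> = ideal_sum R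
              (ideal_prod R (gen R (set (take r xs))) (gen R (set (take r xs))))
              (gen R (set (drop r xs)))
          \<longrightarrow> \<not> (\<exists>x\<in>I. \<exists>i<r. \<exists>j<r. xs ! j = x * xs ! i))
         \<longleftrightarrow> I \<subseteq> colon (colon R \<omega>) m"
proof -
  have R: "subring R" using assms(1) unfolding total_ring_of_fractions_def by blast
  have noetherian: "noetherian R" and L: "local_ring R m"
    using assms(2) unfolding cohen_macaulay_local_def by blast+
  have I: "I \<subseteq> colon m m" using assms(8) unfolding ideal_of_def by blast
  show ?thesis
  proof (rule iffI, goal_cases)
    case no_relation: 1
    show ?case
    proof (cases "colon R \<omega> = R")
      case True
      have "m \<subseteq> R" using local_ring_ideal[OF L] unfolding ideal_of_def by blast
      then show ?thesis using I True unfolding colon_def by blast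
    next
      case False
      then interpret colon_setting R m \<omega>
        using R noetherian L assms(5-7) by unfold_locales
      show ?thesis using mem_colon_if_no_relation I assms(9) no_relation by blast
    qed
  next
    case 2
    then show ?case using no_relation_if_mem_colon[OF R L] by blast
  qed
qed

end
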